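(* Let $Q$ be a nonempty subset of a normed linear space $(U,\|\cdot\|)$. Let $r>0$ and let $\{\beta_n\}_n$ be a sequence of positive real numbers with $\lim_{n\to\infty}\beta_n=1$. Suppose $T:Q\to Q$ satisfies: for all $p,q\in Q$ with $\|p-q\|<r$, $\|T^np-T^nq\|\leq\beta_n\|p-q\|$ for every $n\in\mathbb{N}$. Let $\{q_n\}_n$ be a sequence in $Q$ such that $\|Tq_n-q_n\|\to 0$ as $n\to\infty$. Then for each $m\in\mathbb{N}$, $\|T^mq_n-q_n\|\to 0$ as $n\to\infty$. *)

theory Defs
  imports "HOL-Analysis.Analysis"
begin

end

theory Submission
  imports Defs
begin

text \<open>
  Telescoping: \<open>T\<^sup>m q\<^sub>n - q\<^sub>n\<close> is the sum of the differences \<open>T\<^sup>k (T q\<^sub>n) - T\<^sup>k q\<^sub>n\<close> for \<open>k < m\<close>.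
  Once \<open>\<parallel>T q\<^sub>n - q\<^sub>n\<parallel> < r\<close>, the \<open>k\<close>-th difference is at most \<open>\<beta>\<^sub>k \<parallel>T q\<^sub>n - q\<^sub>n\<parallel>\<close>, so each of
  the finitely many terms tends to 0. Only the individual constants \<open>\<beta>\<^sub>k\<close> matter.
\<close>

lemma local_lipschitz_preserves_tendsto_dist_zero:
  fixes f :: "'a::metric_space \<Rightarrow> 'b::metric_space"
  assumes "r > 0"
    and lip: "\<And>p p'. p \<in> Q \<Longrightarrow> p' \<in> Q \<Longrightarrow> dist p p' < r \<Longrightarrow> dist (f p) (f p') \<le> C * dist p p'"
    and "\<And>n. x n \<in> Q" "\<And>n. y n \<in> Q"
    and lim: "(\<lambda>n. dist (x n) (y n)) \<longlonglongrightarrow> 0"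
  shows "(\<lambda>n. dist (f (x n)) (f (y n))) \<longlonglongrightarrow> 0"
proof (rule Lim_null_comparison)
  have "eventually (\<lambda>n. dist (x n) (y n) < r) sequentially"
    using order_tendstoD(2)[OF lim \<open>r > 0\<close>] .
  then show "eventually (\<lambda>n. norm (dist (f (x n)) (f (y n))) \<le> C * dist (x n) (y n)) sequentially"
    by eventually_elim (simp add: lip assms(3,4))
  show "(\<lambda>n. C * dist (x n) (y n)) \<longlonglongrightarrow> 0"
    using tendsto_mult_right_zero[OF lim] .
qed

lemma tendsto_funpow_dist_zero:
  fixes f :: "'a::metric_space \<Rightarrow> 'a"
  assumes "\<And>k. (\<lambda>n. dist ((f ^^ k) (f (x n))) ((f ^^ k) (x n))) \<longlonglongrightarrow> 0"
  shows "(\<lambda>n. dist ((f ^^ m) (x n)) (x n)) \<longlonglongrightarrow> 0"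
proof (induction m)
  case 0
  then show ?case by simp
next
  case (Suc m)
  have "norm (dist ((f ^^ Suc m) (x n)) (x n))
      \<le> dist ((f ^^ m) (f (x n))) ((f ^^ m) (x n)) + dist ((f ^^ m) (x n)) (x n)" for n
    unfolding funpow_Suc_right comp_def by (simp add: dist_triangle)
  then show ?case
    by (intro Lim_null_comparison[OF always_eventually tendsto_add_zero[OF assms Suc.IH]]) blast
qed

theorem mainTheorem3:
  fixes Q :: "'a::real_normed_vector set" and T :: "'a \<Rightarrow> 'a"
    and r :: real and \<beta> :: "nat \<Rightarrow> real" and q :: "nat \<Rightarrow> 'a"
  assumes "Q \<noteq> {}"
    and "r > 0"
    and "\<And>n. \<beta> n > 0"
    and "\<beta> \<longlonglongrightarrow> 1"
    and "T ` Q \<subseteq> Q"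
    and "\<And>p p' n. p \<in> Q \<Longrightarrow> p' \<in> Q \<Longrightarrow> norm (p - p') < r \<Longrightarrow> n \<ge> 1 \<Longrightarrow>
           norm ((T ^^ n) p - (T ^^ n) p') \<le> \<beta> n * norm (p - p')"
    and "\<And>n. q n \<in> Q"
    and "(\<lambda>n. norm (T (q n) - q n)) \<longlonglongrightarrow> 0"
  shows "\<forall>m. (\<lambda>n. norm ((T ^^ m) (q n) - q n)) \<longlonglongrightarrow> 0"
proof
  fix m
  have "(\<lambda>n. dist ((T ^^ k) (T (q n))) ((T ^^ k) (q n))) \<longlonglongrightarrow> 0" for k
  proof (cases "k = 0")
    case True
    then show ?thesis using assms(8) by (simp add: dist_norm)
  next
    case False
    have "T (q n) \<in> Q" for n
      using assms(5,7) by blast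
    then show ?thesis
      using local_lipschitz_preserves_tendsto_dist_zero[of r Q "T ^^ k" "\<beta> k"] False
        assms(2,6,7,8) by (simp add: dist_norm)
  qed
  from tendsto_funpow_dist_zero[OF this, of m]
  show "(\<lambda>n. norm ((T ^^ m) (q n) - q n)) \<longlonglongrightarrow> 0"
    by (simp add: dist_norm)
qed

end
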